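(* Let $\mathcal{X},\mathcal{Y}\in\{\mathcal{U},\mathcal{D},\mathcal{B},\mathcal{L},\mathcal{R}\}$ with $\mathcal{X}\not\le_{\mathfrak T}\mathcal{Y}$. Then for every $I\in\mathcal{X}$ and $J\in\mathcal{Y}$, $\mathrm{Hom}_B(k_I,k_J)=0$.
   Context: Let $k$ be a field. The bipath poset $B$ has underlying set $(\mathbb{R}\times\{1,2\})\sqcup\{-\infty,+\infty\}$. Its order is: $x\le y$ iff $x=-\infty$, or $y=+\infty$, or $x=(s,i)$, $y=(t,i)$ with the same $i$ and $s\le t$. $B$-persistence modules are functors from $B$ (as a category) to $k$-vector spaces, and $\mathrm{Hom}_B$ denotes natural transformations. An interval of $B$ is a nonempty convex and connected subset (convex: $p,q\in I$, $p\le r\le q$ imply $r\in I$; connected: any two elements are joined by a finite sequence in $I$ with consecutive ones comparable). The interval module $k_I$ is $k$ on $I$ and $0$ elsewhere, with identity maps within $I$ and zero maps otherwise. The intervals of $B$ are divided into five types: - $\mathcal{U}$: intervals contained in $\mathbb{R}\times\{1\}$; - $\mathcal{D}$: intervals contained in $\mathbb{R}\times\{2\}$; - $\mathcal{B}=\{B\}$; - $\mathcal{L}$: intervals $\neq B$ containing $-\infty$; - $\mathcal{R}$: intervals $\neq B$ containing $+\infty$. $\le_{\mathfrak T}$ is the partial order on these five types generated by $\mathcal{R}\le\mathcal{U}$, $\mathcal{R}\le\mathcal{B}$, $\mathcal{R}\le\mathcal{D}$, $\mathcal{U}\le\mathcal{L}$, $\mathcal{B}\le\mathcal{L}$, $\mathcal{D}\le\mathcal{L}$.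 It is the reflexive-transitive closure, so also $\mathcal{R}\le\mathcal{L}$. *)

theory Defs
  imports Main "HOL.Real"
begin

datatype side = S1 | S2

datatype bpt = MInf | PInf | Pt real side

fun bp_le :: "bpt \<Rightarrow> bpt \<Rightarrow> bool" where
  "bp_le MInf y = True"
| "bp_le x PInf = True"
| "bp_le (Pt s i) (Pt t j) = (i = j \<and> s \<le> t)"
| "bp_le _ _ = False"

definition bp_comparable :: "bpt \<Rightarrow> bpt \<Rightarrow> bool" where
  "bp_comparable x y \<longleftrightarrow> bp_le x y \<or> bp_le y x"

definition bp_convex :: "bpt set \<Rightarrow> bool" where
  "bp_convex I \<longleftrightarrow> (\<forall>p q r. p \<in> I \<longrightarrow> q \<in> I \<longrightarrow> bp_le p r \<longrightarrow> bp_le r q \<longrightarrow> r \<in> I)"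

definition bp_connected :: "bpt set \<Rightarrow> bool" where
  "bp_connected I \<longleftrightarrow> (\<forall>p\<in>I. \<forall>q\<in>I. \<exists>xs. xs \<noteq> [] \<and> hd xs = p \<and> last xs = q \<and>
      set xs \<subseteq> I \<and> (\<forall>i. Suc i < length xs \<longrightarrow> bp_comparable (xs ! i) (xs ! Suc i)))"

definition bp_interval :: "bpt set \<Rightarrow> bool" where
  "bp_interval I \<longleftrightarrow> I \<noteq> {} \<and> bp_convex I \<and> bp_connected I"

datatype itype = TU | TD | TB | TL | TR

definition in_itype :: "itype \<Rightarrow> bpt set \<Rightarrow> bool" where
  "in_itype X I \<longleftrightarrow> bp_interval I \<and>
     (case X of
        TU \<Rightarrow> I \<subseteq> {Pt s S1 | s. True}
      | TD \<Rightarrow> I \<subseteq> {Pt s S2 | s. True}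
      | TB \<Rightarrow> I = UNIV
      | TL \<Rightarrow> I \<noteq> UNIV \<and> MInf \<in> I
      | TR \<Rightarrow> I \<noteq> UNIV \<and> PInf \<in> I)"

fun itype_gen :: "itype \<Rightarrow> itype \<Rightarrow> bool" where
  "itype_gen TR TU = True"
| "itype_gen TR TB = True"
| "itype_gen TR TD = True"
| "itype_gen TU TL = True"
| "itype_gen TB TL = True"
| "itype_gen TD TL = True"
| "itype_gen _ _ = False"

definition itype_le :: "itype \<Rightarrow> itype \<Rightarrow> bool" where
  "itype_le = itype_gen\<^sup>*\<^sup>*"

text \<open>The interval module k_I, realised with all spaces inside the field 'k:
  the space at x is k if x in I and the zero space otherwise.\<close>
definition imod_space :: "bpt set \<Rightarrow> bpt \<Rightarrow> 'k::field set" where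
  "imod_space I x = (if x \<in> I then UNIV else {0})"

definition imod_map :: "bpt set \<Rightarrow> bpt \<Rightarrow> bpt \<Rightarrow> 'k::field \<Rightarrow> 'k" where
  "imod_map I x y v = (if x \<in> I \<and> y \<in> I then v else 0)"

definition imod_hom :: "bpt set \<Rightarrow> bpt set \<Rightarrow> (bpt \<Rightarrow> 'k::field \<Rightarrow> 'k) \<Rightarrow> bool" where
  "imod_hom I J \<eta> \<longleftrightarrow>
     (\<forall>x. \<forall>v\<in>imod_space I x. \<eta> x v \<in> imod_space J x) \<and>
     (\<forall>x. \<forall>v\<in>imod_space I x. \<forall>w\<in>imod_space I x. \<eta> x (v + w) = \<eta> x v + \<eta> x w) \<and>
     (\<forall>x. \<forall>a. \<forall>v\<in>imod_space I x. \<eta> x (a * v) = a * \<eta> x v) \<and>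
     (\<forall>x y. bp_le x y \<longrightarrow> (\<forall>v\<in>imod_space I x.
         \<eta> y (imod_map I x y v) = imod_map J x y (\<eta> x v)))"

definition imod_hom_zero :: "'k::field itself \<Rightarrow> bpt set \<Rightarrow> bpt set \<Rightarrow> bool" where
  "imod_hom_zero _ I J \<longleftrightarrow>
     (\<forall>\<eta> :: bpt \<Rightarrow> 'k \<Rightarrow> 'k. imod_hom I J \<eta> \<longrightarrow> (\<forall>x. \<forall>v\<in>imod_space I x. \<eta> x v = 0))"

end

theory Submission
  imports Defs
begin

text \<open>A nonzero component \<open>\<eta> x\<close> of a morphism \<open>k\<^sub>I \<rightarrow> k\<^sub>J\<close> forces \<open>x \<in> I \<inter> J\<close>;
  naturality along \<open>x \<le> y\<close> then forces \<open>y \<in> I\<close> whenever \<open>y \<in> J\<close>, and along \<open>y \<le> x\<close>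
  it forces \<open>y \<in> J\<close> whenever \<open>y \<in> I\<close>. Taking \<open>y = \<plusminus>\<infinity>\<close>, a nonzero morphism needs
  \<open>I \<inter> J \<noteq> {}\<close>, \<open>+\<infinity> \<in> J \<longrightarrow> +\<infinity> \<in> I\<close> and \<open>-\<infinity> \<in> I \<longrightarrow> -\<infinity> \<in> J\<close>. The type of an
  interval is determined by which of \<open>\<plusminus>\<infinity>\<close> it contains and, for U and D, by its line,
  so these conditions force the types to satisfy \<open>X = Y \<or> X = R \<or> Y = L\<close>, which is
  exactly the order on types.\<close>

lemma imod_hom_apply_zero:
  assumes "imod_hom I J (\<eta> :: bpt \<Rightarrow> 'k::field \<Rightarrow> 'k)"
  shows "\<eta> x 0 = 0"
proof -
  have "\<eta> x (0 * 0) = 0 * \<eta> x 0"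
    using assms unfolding imod_hom_def imod_space_def by (metis UNIV_I insertI1)
  then show ?thesis by simp
qed

lemma imod_hom_nonzero_mem:
  assumes hom: "imod_hom I J (\<eta> :: bpt \<Rightarrow> 'k::field \<Rightarrow> 'k)"
    and v: "v \<in> imod_space I x" and nz: "\<eta> x v \<noteq> 0"
  shows "x \<in> I" and "x \<in> J"
proof -
  show "x \<in> I"
    using v nz imod_hom_apply_zero[OF hom] by (auto simp: imod_space_def split: if_splits)
  have "\<eta> x v \<in> imod_space J x" using hom v unfolding imod_hom_def by blast
  then show "x \<in> J" using nz by (simp add: imod_space_def split: if_splits)
qed

lemma imod_hom_nonzero_up:
  assumes hom: "imod_hom I J (\<eta> :: bpt \<Rightarrow> 'k::field \<Rightarrow> 'k)"
    and v: "v \<in> imod_space I x" and nz: "\<eta> x v \<noteq> 0"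
    and "bp_le x y" and "y \<in> J"
  shows "y \<in> I"
proof (rule ccontr)
  assume "y \<notin> I"
  have "\<eta> y (imod_map I x y v) = imod_map J x y (\<eta> x v)"
    using hom v \<open>bp_le x y\<close> unfolding imod_hom_def by blast
  then show False
    using \<open>y \<notin> I\<close> \<open>y \<in> J\<close> nz imod_hom_nonzero_mem(2)[OF hom v nz] imod_hom_apply_zero[OF hom]
    by (simp add: imod_map_def)
qed

lemma imod_hom_nonzero_down:
  assumes hom: "imod_hom I J (\<eta> :: bpt \<Rightarrow> 'k::field \<Rightarrow> 'k)"
    and v: "v \<in> imod_space I x" and nz: "\<eta> x v \<noteq> 0"
    and "bp_le y x" and "y \<in> I"
  shows "y \<in> J"
proof (rule ccontr)
  assume "y \<notin> J"
  have "v \<in> imod_space I y" using \<open>y \<in> I\<close> by (simp add: imod_space_def)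
  then have "\<eta> x (imod_map I y x v) = imod_map J y x (\<eta> y v)"
    using hom \<open>bp_le y x\<close> unfolding imod_hom_def by blast
  then show False
    using \<open>y \<notin> J\<close> \<open>y \<in> I\<close> nz imod_hom_nonzero_mem(1)[OF hom v nz] by (simp add: imod_map_def)
qed

lemma bp_le_PInf: "bp_le x PInf"
  by (cases x) auto

lemma bp_convex_MInf_PInf_eq_UNIV:
  assumes "bp_convex I" and "MInf \<in> I" and "PInf \<in> I"
  shows "I = UNIV"
  using assms bp_le_PInf unfolding bp_convex_def by (metis UNIV_eq_I bp_le.simps(1))

lemma in_itype_MInf_iff:
  assumes "in_itype X I"
  shows "MInf \<in> I \<longleftrightarrow> X = TB \<or> X = TL"
  using assms bp_convex_MInf_PInf_eq_UNIV
  by (cases X) (auto simp: in_itype_def bp_interval_def)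

lemma in_itype_PInf_iff:
  assumes "in_itype X I"
  shows "PInf \<in> I \<longleftrightarrow> X = TB \<or> X = TR"
  using assms bp_convex_MInf_PInf_eq_UNIV
  by (cases X) (auto simp: in_itype_def bp_interval_def)

lemma in_itype_TU_TD_disjoint:
  assumes "in_itype TU I" and "in_itype TD J"
  shows "I \<inter> J = {}"
  using assms unfolding in_itype_def by auto

lemma itype_le_iff: "itype_le X Y \<longleftrightarrow> X = Y \<or> X = TR \<or> Y = TL"
proof
  assume "itype_le X Y"
  then show "X = Y \<or> X = TR \<or> Y = TL"
    unfolding itype_le_def
  proof (induction rule: rtranclp_induct)
    case (step Y Z)
    then show ?case by (cases Y; cases Z) auto
  qed simp
next
  have "itype_gen\<^sup>*\<^sup>* TR TL"
    by (meson itype_gen.simps(1,4) rtranclp.rtrancl_refl rtranclp.rtrancl_into_rtrancl)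
  then have "itype_gen\<^sup>*\<^sup>* TR Y \<and> itype_gen\<^sup>*\<^sup>* X TL" for X Y
    by (cases X; cases Y) (auto intro: r_into_rtranclp)
  then show "X = Y \<or> X = TR \<or> Y = TL \<Longrightarrow> itype_le X Y"
    unfolding itype_le_def by auto
qed

lemma itype_le_if_overlapping:
  assumes "in_itype X I" and "in_itype Y J" and "I \<inter> J \<noteq> {}"
    and "PInf \<in> J \<Longrightarrow> PInf \<in> I" and "MInf \<in> I \<Longrightarrow> MInf \<in> J"
  shows "itype_le X Y"
  using assms in_itype_MInf_iff[OF assms(1)] in_itype_MInf_iff[OF assms(2)]
    in_itype_PInf_iff[OF assms(1)] in_itype_PInf_iff[OF assms(2)] in_itype_TU_TD_disjoint
  unfolding itype_le_iff by (cases X; cases Y) auto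

theorem lemma4p4:
  fixes X Y :: itype and I J :: "bpt set"
  assumes "\<not> itype_le X Y"
    and "in_itype X I" and "in_itype Y J"
  shows "imod_hom_zero TYPE('k::field) I J"
  unfolding imod_hom_zero_def
proof (intro allI impI ballI)
  fix \<eta> :: "bpt \<Rightarrow> 'k \<Rightarrow> 'k" and x and v :: 'k
  assume hom: "imod_hom I J \<eta>" and v: "v \<in> imod_space I x"
  show "\<eta> x v = 0"
  proof (rule ccontr)
    assume nz: "\<eta> x v \<noteq> 0"
    have "I \<inter> J \<noteq> {}" using imod_hom_nonzero_mem[OF hom v nz] by blast
    moreover have "PInf \<in> J \<Longrightarrow> PInf \<in> I"
      using imod_hom_nonzero_up[OF hom v nz bp_le_PInf] .
    moreover have "MInf \<in> I \<Longrightarrow> MInf \<in> J"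
      using imod_hom_nonzero_down[OF hom v nz] by simp
    ultimately have "itype_le X Y" using itype_le_if_overlapping assms(2,3) by blast
    with assms(1) show False ..
  qed
qed

end
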